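(* In the sleeping multi-armed bandit setting, let $(\ell_t)_{t\ge1}$ be i.i.d. random loss vectors in $[0,1]^K$ with mean vector $\mu$, where for each $t$, $\ell_t$ is independent of everything determined before the learner observes $\ell_t(k_t)$ at round $t$ (including $S_1,\dots,S_t$ and $k_1,\dots,k_t$), and let the availability sets $(S_t)$ be arbitrary with $S_t$ depending only on the past. Let $\sigma^*$ be an ordering with $\mu_{\sigma^*_1}\le\mu_{\sigma^*_2}\le\dots\le\mu_{\sigma^*_K}$. Then for any algorithm and every $k\in[K]$, $$\mathbb E\big[R_T^{\mathrm{ext}}(k)\big]\le\mathbb E\big[R_T^{\mathrm{ordering}}(\sigma^* )\big].$$
   Context: Sleeping multi-armed bandit setting: $K$ arms $[K]$. At each round $t$ a nonempty availability set $S_t\subseteq[K]$ is revealed, the learner (possibly randomized, using only $S_1,\dots,S_t$, previously observed losses and internal randomness) selects $k_t\in S_t$ and observes $\ell_t(k_t)$. External sleeping regret: $R_T^{\mathrm{ext}}(k)=\sum_{t=1}^T\big(\ell_t(k_t)-\ell_t(k)\big)\mathbf 1\{k\in S_t\}$. An ordering is a permutation $\sigma=(\sigma_1,\dots,\sigma_K)$ of $[K]$; for nonempty $S\subseteq[K]$, $\sigma(S)=\sigma_m$ with $m=\min\{i:\sigma_i\in S\}$. Ordering regret: $R_T^{\mathrm{ordering}}(\sigma)=\sum_{t=1}^T\big(\ell_t(k_t)-\ell_t(\sigma(S_t))\big)$. *)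

theory Defs
  imports "HOL-Probability.Probability"
begin

text \<open>Arms are the elements of a finite type 'k (so K = CARD('k)).
  An ordering is a list enumerating every arm exactly once.\<close>

definition is_ordering :: "'k::finite list \<Rightarrow> bool" where
  "is_ordering \<sigma> \<longleftrightarrow> distinct \<sigma> \<and> set \<sigma> = UNIV"

definition ord_sel :: "'k list \<Rightarrow> 'k set \<Rightarrow> 'k" where
  "ord_sel \<sigma> S = hd (filter (\<lambda>x. x \<in> S) \<sigma>)"

definition ext_regret ::
  "nat \<Rightarrow> (nat \<Rightarrow> 'k \<Rightarrow> real) \<Rightarrow> (nat \<Rightarrow> 'k set) \<Rightarrow> (nat \<Rightarrow> 'k) \<Rightarrow> 'k \<Rightarrow> real" where
  "ext_regret T l S A k = (\<Sum>t\<in>{1..T}. (l t (A t) - l t k) * (if k \<in> S t then 1 else 0))"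

definition ordering_regret ::
  "nat \<Rightarrow> (nat \<Rightarrow> 'k \<Rightarrow> real) \<Rightarrow> (nat \<Rightarrow> 'k set) \<Rightarrow> (nat \<Rightarrow> 'k) \<Rightarrow> 'k list \<Rightarrow> real" where
  "ordering_regret T l S A \<sigma> = (\<Sum>t\<in>{1..T}. l t (A t) - l t (ord_sel \<sigma> (S t)))"

end

theory Submission
  imports Defs
begin

text \<open>Both regrets are linear in the loss vectors: round t contributes
  \<open>\<Sum>j. \<ell>\<^sub>t(j) w\<^sub>t(j)\<close> with a weight vector \<open>w\<^sub>t\<close> that depends only on \<open>S\<^sub>t\<close> and \<open>k\<^sub>t\<close>.
  These are fixed before \<open>\<ell>\<^sub>t\<close> is revealed and hence independent of it, so in expectation
  each loss \<open>\<ell>\<^sub>t(j)\<close> may be replaced by its mean \<open>\<mu>\<^sub>j\<close>. With means in place of losses, the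
  ordering term \<open>\<mu>(k\<^sub>t) - \<mu>(\<sigma>\<^sup>*(S\<^sub>t))\<close> dominates the external term \<open>(\<mu>(k\<^sub>t) - \<mu>(k)) 1{k \<in> S\<^sub>t}\<close>
  pointwise, since \<open>\<sigma>\<^sup>*(S\<^sub>t)\<close> has the least mean among the available arms.\<close>

lemma (in prob_space) indep_var_of_indep_set:
  assumes sub: "subalgebra M N"
    and Y: "Y \<in> M \<rightarrow>\<^sub>M P"
    and indep: "indep_set (sets N) {Y -` X \<inter> space M | X. X \<in> sets P}"
    and G: "G \<in> N \<rightarrow>\<^sub>M Q"
    and h: "h \<in> P \<rightarrow>\<^sub>M Q"
  shows "indep_var Q G Q (\<lambda>\<omega>. h (Y \<omega>))"
  unfolding indep_var_eq
proof (intro conjI)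
  have space_N: "space N = space M"
    using sub by (auto simp: subalgebra_def)
  show "random_variable Q G"
    using measurable_from_subalg[OF sub G] .
  show "random_variable Q (\<lambda>\<omega>. h (Y \<omega>))"
    using Y h by simp
  let ?Y_events = "{Y -` X \<inter> space M | X. X \<in> sets P}"
  have "Int_stable ?Y_events"
  proof (rule Int_stableI, safe)
    fix X X' assume "X \<in> sets P" "X' \<in> sets P"
    then show "\<exists>X''. Y -` X \<inter> space M \<inter> (Y -` X' \<inter> space M) = Y -` X'' \<inter> space M \<and> X'' \<in> sets P"
      by (intro exI[of _ "X \<inter> X'"]) auto
  qed
  then have indep_sigma: "indep_set (sigma_sets (space M) (sets N)) (sigma_sets (space M) ?Y_events)"
    by (intro indep_set_sigma_sets indep) (auto simp: Int_stable_def)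
  have "sigma_sets (space M) {G -` A \<inter> space M | A. A \<in> sets Q} \<subseteq> sigma_sets (space M) (sets N)"
    using G by (intro sigma_sets_mono') (auto simp: measurable_def space_N)
  moreover have "sigma_sets (space M) {(\<lambda>\<omega>. h (Y \<omega>)) -` A \<inter> space M | A. A \<in> sets Q}
      \<subseteq> sigma_sets (space M) ?Y_events"
  proof (intro sigma_sets_mono' subsetI, safe)
    fix A assume "A \<in> sets Q"
    then have "h -` A \<inter> space P \<in> sets P" and "(\<lambda>\<omega>. h (Y \<omega>)) -` A \<inter> space M = Y -` (h -` A \<inter> space P) \<inter> space M"
      using h measurable_space[OF Y] by auto
    then show "\<exists>X. (\<lambda>\<omega>. h (Y \<omega>)) -` A \<inter> space M = Y -` X \<inter> space M \<and> X \<in> sets P"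
      by blast
  qed
  ultimately show "indep_set (sigma_sets (space M) {G -` A \<inter> space M | A. A \<in> sets Q})
      (sigma_sets (space M) {(\<lambda>\<omega>. h (Y \<omega>)) -` A \<inter> space M | A. A \<in> sets Q})"
    using indep_sigma unfolding indep_set_def
    by (rule_tac indep_sets_mono_sets) (auto split: bool.split)
qed

lemma measurable_Pair_count_space:
  fixes X :: "'a \<Rightarrow> 'b::countable" and Z :: "'a \<Rightarrow> 'c::countable"
  assumes "X \<in> N \<rightarrow>\<^sub>M count_space UNIV" and "Z \<in> N \<rightarrow>\<^sub>M count_space UNIV"
  shows "(\<lambda>\<omega>. (X \<omega>, Z \<omega>)) \<in> N \<rightarrow>\<^sub>M count_space UNIV"
  using measurable_Pair[OF assms]
  by (simp add: pair_measure_countable)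

lemma (in finite_measure) integrable_finite_valued:
  fixes X :: "'a \<Rightarrow> 'b::finite" and f :: "'b \<Rightarrow> real"
  assumes "X \<in> M \<rightarrow>\<^sub>M count_space UNIV"
  shows "integrable M (\<lambda>\<omega>. f (X \<omega>))"
proof (rule integrable_const_bound[where B="Max (range (\<lambda>b. \<bar>f b\<bar>))"])
  show "AE \<omega> in M. norm (f (X \<omega>)) \<le> Max (range (\<lambda>b. \<bar>f b\<bar>))"
    by (intro AE_I2) (simp add: Max_ge)
  show "(\<lambda>\<omega>. f (X \<omega>)) \<in> borel_measurable M"
    by (rule measurable_compose[OF assms]) simp
qed

lemma (in prob_space) integral_sum_mult_indep_subalgebra:
  fixes Y :: "'a \<Rightarrow> 'k::finite \<Rightarrow> real" and W :: "'a \<Rightarrow> 'k \<Rightarrow> real"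
  assumes sub: "subalgebra M N"
    and Y: "Y \<in> M \<rightarrow>\<^sub>M (\<Pi>\<^sub>M j\<in>UNIV. borel)"
    and indep: "indep_set (sets N) {Y -` X \<inter> space M | X. X \<in> sets (\<Pi>\<^sub>M j\<in>UNIV. borel)}"
    and Y_int: "\<And>j. integrable M (\<lambda>\<omega>. Y \<omega> j)"
    and W_meas: "\<And>j. (\<lambda>\<omega>. W \<omega> j) \<in> borel_measurable N"
    and W_int: "\<And>j. integrable M (\<lambda>\<omega>. W \<omega> j)"
  shows "integrable M (\<lambda>\<omega>. \<Sum>j\<in>UNIV. Y \<omega> j * W \<omega> j)"
    and "expectation (\<lambda>\<omega>. \<Sum>j\<in>UNIV. Y \<omega> j * W \<omega> j)
       = expectation (\<lambda>\<omega>. \<Sum>j\<in>UNIV. expectation (\<lambda>\<eta>. Y \<eta> j) * W \<omega> j)"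
proof -
  have indep_j: "indep_var borel (\<lambda>\<omega>. W \<omega> j) borel (\<lambda>\<omega>. Y \<omega> j)" for j
    by (rule indep_var_of_indep_set[OF sub Y indep W_meas]) simp
  have prod_int: "integrable M (\<lambda>\<omega>. Y \<omega> j * W \<omega> j)" for j
    using indep_var_integrable[OF indep_j W_int Y_int] by (simp add: mult.commute)
  then show "integrable M (\<lambda>\<omega>. \<Sum>j\<in>UNIV. Y \<omega> j * W \<omega> j)"
    by simp
  have "expectation (\<lambda>\<omega>. \<Sum>j\<in>UNIV. Y \<omega> j * W \<omega> j)
      = (\<Sum>j\<in>UNIV. expectation (\<lambda>\<omega>. W \<omega> j * Y \<omega> j))"
    using prod_int by (simp add: mult.commute)
  also have "\<dots> = (\<Sum>j\<in>UNIV. expectation (\<lambda>\<eta>. Y \<eta> j) * expectation (\<lambda>\<omega>. W \<omega> j))"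
    by (simp add: indep_var_lebesgue_integral[OF indep_j W_int Y_int] mult.commute)
  also have "\<dots> = expectation (\<lambda>\<omega>. \<Sum>j\<in>UNIV. expectation (\<lambda>\<eta>. Y \<eta> j) * W \<omega> j)"
    using W_int by simp
  finally show "expectation (\<lambda>\<omega>. \<Sum>j\<in>UNIV. Y \<omega> j * W \<omega> j)
      = expectation (\<lambda>\<omega>. \<Sum>j\<in>UNIV. expectation (\<lambda>\<eta>. Y \<eta> j) * W \<omega> j)" .
qed

lemma (in prob_space) integral_sum_mult_finite_valued_weight:
  fixes Y :: "'a \<Rightarrow> 'k::finite \<Rightarrow> real" and X :: "'a \<Rightarrow> 'b::finite" and w :: "'b \<Rightarrow> 'k \<Rightarrow> real"
  assumes sub: "subalgebra M N"
    and Y: "Y \<in> M \<rightarrow>\<^sub>M (\<Pi>\<^sub>M j\<in>UNIV. borel)"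
    and indep: "indep_set (sets N) {Y -` X \<inter> space M | X. X \<in> sets (\<Pi>\<^sub>M j\<in>UNIV. borel)}"
    and Y_int: "\<And>j. integrable M (\<lambda>\<omega>. Y \<omega> j)"
    and X: "X \<in> N \<rightarrow>\<^sub>M count_space UNIV"
  shows "integrable M (\<lambda>\<omega>. \<Sum>j\<in>UNIV. Y \<omega> j * w (X \<omega>) j)"
    and "expectation (\<lambda>\<omega>. \<Sum>j\<in>UNIV. Y \<omega> j * w (X \<omega>) j)
       = expectation (\<lambda>\<omega>. \<Sum>j\<in>UNIV. expectation (\<lambda>\<eta>. Y \<eta> j) * w (X \<omega>) j)"
proof -
  have "(\<lambda>\<omega>. w (X \<omega>) j) \<in> borel_measurable N" for j
    by (rule measurable_compose[OF X]) simp
  moreover have "integrable M (\<lambda>\<omega>. w (X \<omega>) j)" for j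
    by (rule integrable_finite_valued[OF measurable_from_subalg[OF sub X]])
  ultimately show "integrable M (\<lambda>\<omega>. \<Sum>j\<in>UNIV. Y \<omega> j * w (X \<omega>) j)"
    and "expectation (\<lambda>\<omega>. \<Sum>j\<in>UNIV. Y \<omega> j * w (X \<omega>) j)
       = expectation (\<lambda>\<omega>. \<Sum>j\<in>UNIV. expectation (\<lambda>\<eta>. Y \<eta> j) * w (X \<omega>) j)"
    by (rule integral_sum_mult_indep_subalgebra[OF sub Y indep Y_int])+
qed

definition ext_weight :: "'k \<Rightarrow> 'k set \<Rightarrow> 'k \<Rightarrow> 'k \<Rightarrow> real" where
  "ext_weight k s a j = (of_bool (j = a) - of_bool (j = k)) * of_bool (k \<in> s)"

definition ordering_weight :: "'k list \<Rightarrow> 'k set \<Rightarrow> 'k \<Rightarrow> 'k \<Rightarrow> real" where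
  "ordering_weight \<sigma> s a j = of_bool (j = a) - of_bool (j = ord_sel \<sigma> s)"

lemma sum_mult_of_bool_eq:
  fixes f :: "'k::finite \<Rightarrow> real"
  shows "(\<Sum>j\<in>UNIV. f j * of_bool (j = a)) = f a"
  by (simp add: of_bool_def if_distrib[of "\<lambda>x. f _ * x"] cong: if_cong)

lemma sum_mult_ext_weight:
  fixes f :: "'k::finite \<Rightarrow> real"
  shows "(\<Sum>j\<in>UNIV. f j * ext_weight k s a j) = (f a - f k) * of_bool (k \<in> s)"
proof -
  have "f j * ext_weight k s a j = (f j * of_bool (j = a) - f j * of_bool (j = k)) * of_bool (k \<in> s)" for j
    by (simp add: ext_weight_def algebra_simps)
  then show ?thesis
    by (simp add: sum_distrib_right[symmetric] sum_subtractf sum_mult_of_bool_eq)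
qed

lemma sum_mult_ordering_weight:
  fixes f :: "'k::finite \<Rightarrow> real"
  shows "(\<Sum>j\<in>UNIV. f j * ordering_weight \<sigma> s a j) = f a - f (ord_sel \<sigma> s)"
  by (simp add: ordering_weight_def right_diff_distrib sum_subtractf sum_mult_of_bool_eq)

lemma ext_regret_eq_sum_weight:
  fixes l :: "nat \<Rightarrow> 'k::finite \<Rightarrow> real"
  shows "ext_regret T l S A k = (\<Sum>t\<in>{1..T}. \<Sum>j\<in>UNIV. l t j * ext_weight k (S t) (A t) j)"
  by (simp add: ext_regret_def sum_mult_ext_weight of_bool_def)

lemma ordering_regret_eq_sum_weight:
  fixes l :: "nat \<Rightarrow> 'k::finite \<Rightarrow> real"
  shows "ordering_regret T l S A \<sigma> = (\<Sum>t\<in>{1..T}. \<Sum>j\<in>UNIV. l t j * ordering_weight \<sigma> (S t) (A t) j)"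
  by (simp add: ordering_regret_def sum_mult_ordering_weight)

lemma ord_sel_min:
  fixes \<sigma> :: "'k::finite list" and \<mu> :: "'k \<Rightarrow> 'b::linorder"
  assumes "is_ordering \<sigma>" and "sorted (map \<mu> \<sigma>)" and "a \<in> s"
  shows "\<mu> (ord_sel \<sigma> s) \<le> \<mu> a"
proof -
  let ?available = "filter (\<lambda>x. x \<in> s) \<sigma>"
  have a: "a \<in> set ?available"
    using assms(1,3) by (auto simp: is_ordering_def)
  then obtain b bs where available: "?available = b # bs"
    by (cases ?available) auto
  have "sorted (map \<mu> (b # bs))"
    using sorted_filter[OF assms(2), of "\<lambda>x. x \<in> s"] by (simp only: available)
  with a show ?thesis
    unfolding ord_sel_def available by auto
qed

lemma sum_mult_ext_weight_le_ordering_weight: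
  fixes \<mu> :: "'k::finite \<Rightarrow> real"
  assumes "is_ordering \<sigma>" and "sorted (map \<mu> \<sigma>)" and "a \<in> s"
  shows "(\<Sum>j\<in>UNIV. \<mu> j * ext_weight k s a j) \<le> (\<Sum>j\<in>UNIV. \<mu> j * ordering_weight \<sigma> s a j)"
  using ord_sel_min[OF assms] ord_sel_min[OF assms(1,2), of k s]
  by (simp add: sum_mult_ext_weight sum_mult_ordering_weight)

theorem mainTheorem5:
  fixes M :: "'a measure"
    and F :: "nat \<Rightarrow> 'a measure"
    and L :: "nat \<Rightarrow> 'a \<Rightarrow> 'k::finite \<Rightarrow> real"
    and S :: "nat \<Rightarrow> 'a \<Rightarrow> 'k set"
    and A :: "nat \<Rightarrow> 'a \<Rightarrow> 'k"
    and \<mu> :: "'k \<Rightarrow> real"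
    and \<sigma>s :: "'k list"
    and T :: nat and k :: 'k
  assumes "prob_space M"
    \<comment> \<open>F t: everything determined before the learner observes its loss at round t\<close>
    and F_sub: "\<And>t. subalgebra M (F t)"
    and F_mono: "\<And>s t. s \<le> t \<Longrightarrow> subalgebra (F t) (F s)"
    and L_meas: "\<And>t. L t \<in> M \<rightarrow>\<^sub>M (\<Pi>\<^sub>M j\<in>UNIV. borel)"
    and L_indep: "prob_space.indep_vars M (\<lambda>_. \<Pi>\<^sub>M j\<in>UNIV. borel) L UNIV"
    and L_ident: "\<And>t. distr M (\<Pi>\<^sub>M j\<in>UNIV. borel) (L t) = distr M (\<Pi>\<^sub>M j\<in>UNIV. borel) (L 1)"
    and L_range: "\<And>t \<omega> j. \<omega> \<in> space M \<Longrightarrow> 0 \<le> L t \<omega> j \<and> L t \<omega> j \<le> 1"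
    and L_mean: "\<And>t j. prob_space.expectation M (\<lambda>\<omega>. L t \<omega> j) = \<mu> j"
    and S_meas: "\<And>t. S t \<in> F t \<rightarrow>\<^sub>M count_space UNIV"
    and A_meas: "\<And>t. A t \<in> F t \<rightarrow>\<^sub>M count_space UNIV"
    and obs_meas: "\<And>s t. s < t \<Longrightarrow> (\<lambda>\<omega>. L s \<omega> (A s \<omega>)) \<in> borel_measurable (F t)"
    and S_ne: "\<And>t \<omega>. \<omega> \<in> space M \<Longrightarrow> S t \<omega> \<noteq> {}"
    and A_in: "\<And>t \<omega>. \<omega> \<in> space M \<Longrightarrow> A t \<omega> \<in> S t \<omega>"
    and L_indep_past: "\<And>t. prob_space.indep_set M (sets (F t))
        {L t -` X \<inter> space M | X. X \<in> sets (\<Pi>\<^sub>M j\<in>UNIV. borel)}"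
    and \<sigma>s_ord: "is_ordering \<sigma>s"
    and \<sigma>s_sorted: "sorted (map \<mu> \<sigma>s)"
  shows "prob_space.expectation M (\<lambda>\<omega>. ext_regret T (\<lambda>t. L t \<omega>) (\<lambda>t. S t \<omega>) (\<lambda>t. A t \<omega>) k)
       \<le> prob_space.expectation M (\<lambda>\<omega>. ordering_regret T (\<lambda>t. L t \<omega>) (\<lambda>t. S t \<omega>) (\<lambda>t. A t \<omega>) \<sigma>s)"
proof -
  interpret prob_space M by fact
  have round_meas: "(\<lambda>\<omega>. (S t \<omega>, A t \<omega>)) \<in> F t \<rightarrow>\<^sub>M count_space UNIV" for t
    using S_meas A_meas by (rule measurable_Pair_count_space)
  have L_int: "integrable M (\<lambda>\<omega>. L t \<omega> j)" for t j
    using L_range measurable_component_singleton'[OF L_meas measurable_ident, of j]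
    by (intro integrable_const_bound[where B=1]) auto
  have mean_int: "integrable M (\<lambda>\<omega>. \<Sum>j\<in>UNIV. \<mu> j * w (S t \<omega>) (A t \<omega>) j)"
    for t and w :: "'k set \<Rightarrow> 'k \<Rightarrow> 'k \<Rightarrow> real"
    using integrable_finite_valued[OF measurable_from_subalg[OF F_sub round_meas],
        of "\<lambda>(s, a). \<Sum>j\<in>UNIV. \<mu> j * w s a j"] by simp
  have weighted:
    "integrable M (\<lambda>\<omega>. \<Sum>j\<in>UNIV. L t \<omega> j * w (S t \<omega>) (A t \<omega>) j)"
    "expectation (\<lambda>\<omega>. \<Sum>j\<in>UNIV. L t \<omega> j * w (S t \<omega>) (A t \<omega>) j)
      = expectation (\<lambda>\<omega>. \<Sum>j\<in>UNIV. \<mu> j * w (S t \<omega>) (A t \<omega>) j)"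
    for t and w :: "'k set \<Rightarrow> 'k \<Rightarrow> 'k \<Rightarrow> real"
    using integral_sum_mult_finite_valued_weight[OF F_sub L_meas L_indep_past L_int round_meas,
        of t "case_prod w"] by (simp_all add: L_mean)
  have "prob_space.expectation M (\<lambda>\<omega>. ext_regret T (\<lambda>t. L t \<omega>) (\<lambda>t. S t \<omega>) (\<lambda>t. A t \<omega>) k)
      = (\<Sum>t\<in>{1..T}. expectation (\<lambda>\<omega>. \<Sum>j\<in>UNIV. \<mu> j * ext_weight k (S t \<omega>) (A t \<omega>) j))"
    unfolding ext_regret_eq_sum_weight using weighted by simp
  also have "\<dots> \<le> (\<Sum>t\<in>{1..T}. expectation (\<lambda>\<omega>. \<Sum>j\<in>UNIV. \<mu> j * ordering_weight \<sigma>s (S t \<omega>) (A t \<omega>) j))"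
  proof (rule sum_mono, rule integral_mono)
  qed (rule mean_int sum_mult_ext_weight_le_ordering_weight[OF \<sigma>s_ord \<sigma>s_sorted A_in])+
  also have "\<dots> = prob_space.expectation M (\<lambda>\<omega>. ordering_regret T (\<lambda>t. L t \<omega>) (\<lambda>t. S t \<omega>) (\<lambda>t. A t \<omega>) \<sigma>s)"
    unfolding ordering_regret_eq_sum_weight using weighted by simp
  finally show ?thesis .
qed

end
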